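(* Let $k$ be a field of characteristic $p>0$, let $d_1,\ldots,d_n$ be positive integers and $A = k[x_1,\ldots,x_n]/(x_1^{d_1}, \ldots, x_n^{d_n})$. Write $d_i = N_i p + r_i$ with $N_i$ integers and $0 < r_i \le p$, and let $N = \sum_{i=1}^n N_i$. Let $0\le j \le n$ with $j\le N+1$, and let $m=N-j+1$. Then $$\ell^{mp} \cdot x_1^{r_1} x_2^{r_2} \cdots x_j^{r_j} = 0$$ in $A$ for every linear form $\ell$, where the monomial $x_1^{r_1} \cdots x_j^{r_j}$ is interpreted as $1$ when $j=0$.
   Context: A linear form is an element $c_1x_1+\cdots+c_nx_n$ with $c_i\in k$. *)

theory Defs
  imports "HOL-Library.Poly_Mapping"
begin

text \<open>The paper's variables x_1..x_n correspond to x_0..x_{n-1} here.\<close>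

type_synonym 'a mpoly = "(nat \<Rightarrow>\<^sub>0 nat) \<Rightarrow>\<^sub>0 'a"

definition Var :: "nat \<Rightarrow> 'a::comm_ring_1 mpoly" where
  "Var i = Poly_Mapping.single (Poly_Mapping.single i 1) 1"

definition Const :: "'a::comm_ring_1 \<Rightarrow> 'a mpoly" where
  "Const c = Poly_Mapping.single 0 c"

definition linear_form :: "nat \<Rightarrow> 'a::comm_ring_1 mpoly \<Rightarrow> bool" where
  "linear_form n l \<longleftrightarrow> (\<exists>c. l = (\<Sum>i<n. Const (c i) * Var i))"

definition zero_in_A :: "nat \<Rightarrow> (nat \<Rightarrow> nat) \<Rightarrow> 'a::comm_ring_1 mpoly \<Rightarrow> bool" where
  "zero_in_A n d f \<longleftrightarrow> (\<exists>g :: nat \<Rightarrow> 'a mpoly. f = (\<Sum>i<n. g i * Var i ^ d i))"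

end

theory Submission
  imports Defs "HOL-Computational_Algebra.Primes"
begin

text \<open>In characteristic \<open>p\<close> the Frobenius turns \<open>\<ell>\<^sup>p\<close> into the form
  \<open>L = \<Sum> c\<^sub>i\<^sup>p x\<^sub>i\<^sup>p\<close> in the \<open>p\<close>-th powers of the variables, so \<open>\<ell>\<^sup>m\<^sup>p = L\<^sup>m\<close>.
  Expanding \<open>L\<^sup>m x\<^sub>1\<^sup>r\<^sup>1 \<cdots> x\<^sub>j\<^sup>r\<^sup>j\<close> gives monomials \<open>\<Prod> x\<^sub>i\<^sup>s\<^sup>i\<^sup>+\<^sup>p\<^sup>a\<^sup>i\<close> with
  \<open>\<Sum> a\<^sub>i = m\<close>. Such a monomial survives in \<open>A\<close> only if \<open>s\<^sub>i + p a\<^sub>i < d\<^sub>i\<close> for all \<open>i\<close>,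
  which forces \<open>a\<^sub>i \<le> N\<^sub>i - 1\<close> for \<open>i \<le> j\<close> (where \<open>s\<^sub>i = r\<^sub>i\<close>) and \<open>a\<^sub>i \<le> N\<^sub>i\<close> otherwise;
  hence \<open>\<Sum> a\<^sub>i \<le> N - j < m\<close>, a contradiction.\<close>

lemma zero_in_A_add:
  assumes "zero_in_A n d f" and "zero_in_A n d g"
  shows "zero_in_A n d (f + g)"
proof -
  from assms obtain a b where "f = (\<Sum>i<n. a i * Var i ^ d i)" "g = (\<Sum>i<n. b i * Var i ^ d i)"
    unfolding zero_in_A_def by blast
  then show ?thesis
    unfolding zero_in_A_def
    by (intro exI[of _ "\<lambda>i. a i + b i"]) (simp add: sum.distrib distrib_right)
qed

lemma zero_in_A_mult_left:
  assumes "zero_in_A n d f"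
  shows "zero_in_A n d (h * f)"
proof -
  from assms obtain a where "f = (\<Sum>i<n. a i * Var i ^ d i)"
    unfolding zero_in_A_def by blast
  then show ?thesis
    unfolding zero_in_A_def
    by (intro exI[of _ "\<lambda>i. h * a i"]) (simp add: sum_distrib_left mult.assoc)
qed

lemma zero_in_A_sum:
  "(\<And>x. x \<in> X \<Longrightarrow> zero_in_A n d (f x)) \<Longrightarrow> zero_in_A n d (\<Sum>x\<in>X. f x)"
proof (induction X rule: infinite_finite_induct)
  case (insert x X)
  then show ?case by (simp add: zero_in_A_add)
qed (simp_all add: zero_in_A_def exI[of _ "\<lambda>_. 0"])

lemma zero_in_A_if_Var_power_dvd:
  assumes "i < n" and "Var i ^ d i dvd f"
  shows "zero_in_A n d f"
proof -
  from assms(2) obtain h where f: "f = h * Var i ^ d i"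
    by (metis dvdE mult.commute)
  have "(\<Sum>k<n. (if k = i then h else 0) * Var k ^ d k) = (\<Sum>k<n. if k = i then h * Var k ^ d k else 0)"
    by (rule sum.cong) simp_all
  also have "\<dots> = f"
    using assms(1) f by simp
  finally show ?thesis
    unfolding zero_in_A_def by (intro exI[of _ "\<lambda>k. if k = i then h else 0"]) (rule sym)
qed

definition var_monomial :: "nat \<Rightarrow> (nat \<Rightarrow> nat) \<Rightarrow> 'a::comm_ring_1 mpoly" where
  "var_monomial n s = (\<Prod>i<n. Var i ^ s i)"

lemma Var_power_mult_var_monomial:
  assumes "i < n"
  shows "Var i ^ k * var_monomial n s = (var_monomial n (s(i := s i + k)) :: 'a::comm_ring_1 mpoly)"
proof -
  have "var_monomial n s = (Var i ^ s i :: 'a mpoly) * (\<Prod>k\<in>{..<n}-{i}. Var k ^ s k)"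
   and "var_monomial n (s(i := s i + k)) = (Var i ^ (s i + k) :: 'a mpoly) * (\<Prod>k\<in>{..<n}-{i}. Var k ^ s k)"
    unfolding var_monomial_def using assms by (simp_all add: prod.remove)
  then show ?thesis by (simp add: power_add algebra_simps)
qed

lemma Var_power_dvd_var_monomial:
  assumes "i < n" and "e \<le> s i"
  shows "Var i ^ e dvd (var_monomial n s :: 'a::comm_ring_1 mpoly)"
proof -
  have "(Var i ^ e :: 'a mpoly) * var_monomial n (s(i := s i - e)) = var_monomial n s"
    using Var_power_mult_var_monomial[OF assms(1), of e "s(i := s i - e)"] assms(2)
    by (simp add: fun_upd_idem)
  then show ?thesis by (metis dvd_triv_left)
qed

text \<open>Each factor \<open>L\<close> multiplies the monomial by some \<open>x\<^sub>i\<^sup>q\<close>; \<open>b\<^sub>i\<close> bounds how many of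
  these the variable \<open>x\<^sub>i\<close> can absorb before the monomial dies, so more than \<open>\<Sum> b\<^sub>i\<close>
  factors always kill it.\<close>

lemma power_sum_Var_power_mult_var_monomial_zero_in_A:
  fixes a :: "nat \<Rightarrow> 'a::comm_ring_1 mpoly"
  assumes "\<forall>i<n. d i \<le> s i + q * (b i + 1)" and "(\<Sum>i<n. b i) < m"
  shows "zero_in_A n d ((\<Sum>i<n. a i * Var i ^ q) ^ m * var_monomial n s)"
  using assms
proof (induction m arbitrary: s b)
  case 0
  then show ?case by simp
next
  case (Suc m)
  define L where "L = (\<Sum>i<n. a i * Var i ^ q)"
  have "L ^ Suc m * var_monomial n s = L ^ m * (L * var_monomial n s)"
    by (simp add: ac_simps)
  also have "L * var_monomial n s = (\<Sum>i<n. a i * var_monomial n (s(i := s i + q)))"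
    unfolding L_def sum_distrib_right by (simp add: mult.assoc Var_power_mult_var_monomial)
  finally have expand: "L ^ Suc m * var_monomial n s
      = (\<Sum>i<n. a i * (L ^ m * var_monomial n (s(i := s i + q))))"
    by (simp add: sum_distrib_left mult.left_commute)
  have "zero_in_A n d (L ^ m * var_monomial n (s(i := s i + q)))" if i: "i < n" for i
  proof (cases "b i = 0")
    case True
    then have "Var i ^ d i dvd var_monomial n (s(i := s i + q))"
      using Suc.prems(1) i by (intro Var_power_dvd_var_monomial) auto
    then show ?thesis
      using i by (intro zero_in_A_mult_left zero_in_A_if_Var_power_dvd)
  next
    case False
    let ?b = "b(i := b i - 1)"
    have "(\<Sum>k<n. ?b k) + 1 = (\<Sum>k<n. b k)"
      using i False by (simp add: sum.remove[of "{..<n}" i] sum.cong[of _ _ ?b b])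
    then have "(\<Sum>k<n. ?b k) < m" using Suc.prems(2) by simp
    moreover have "\<forall>k<n. d k \<le> (s(i := s i + q)) k + q * (?b k + 1)"
      using Suc.prems(1) False by (auto simp: algebra_simps)
    ultimately show ?thesis unfolding L_def using Suc.IH by blast
  qed
  then show ?case
    unfolding L_def[symmetric] expand by (auto intro: zero_in_A_sum zero_in_A_mult_left)
qed

lemma Const_power: "(Const c :: 'a::comm_ring_1 mpoly) ^ k = Const (c ^ k)"
  by (induction k) (simp_all add: Const_def mult_single)

lemma CHAR_mpoly: "CHAR('a::comm_ring_1 mpoly) = CHAR('a)"
proof (rule CHAR_eqI)
  show "of_nat CHAR('a) = (0 :: 'a mpoly)"
    by (metis of_nat_CHAR single_of_nat single_zero)
  fix x assume "of_nat x = (0 :: 'a mpoly)"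
  then have "(of_nat x :: 'a) = 0"
    by (metis inj_single injD single_of_nat single_zero)
  then show "CHAR('a) dvd x" by (simp add: of_nat_eq_0_iff_char_dvd)
qed

lemma linear_form_power_CHAR:
  fixes c :: "nat \<Rightarrow> 'a::comm_ring_1"
  assumes "prime CHAR('a)"
  shows "(\<Sum>i<n. Const (c i) * Var i) ^ CHAR('a) = (\<Sum>i<n. Const (c i ^ CHAR('a)) * Var i ^ CHAR('a))"
  using freshmans_dream_sum[where f="\<lambda>i. Const (c i) * Var i" and A="{..<n}"] assms
  by (simp add: CHAR_mpoly power_mult_distrib Const_power)

lemma var_monomial_initial_segment:
  assumes "j \<le> n"
  shows "var_monomial n (\<lambda>i. if i < j then r i else 0) = (\<Prod>i<j. Var i ^ r i :: 'a::comm_ring_1 mpoly)"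
proof -
  have "{..<n} = {..<j} \<union> {j..<n}" using assms by auto
  then show ?thesis
    unfolding var_monomial_def by (simp add: prod.union_disjoint ivl_disj_int)
qed

lemma power_sum_Var_power_mult_prod_zero_in_A:
  fixes a :: "nat \<Rightarrow> 'a::comm_ring_1 mpoly"
  assumes d: "\<forall>i<n. d i = M i * p + r i" and r_le: "\<forall>i<n. r i \<le> p"
    and "j \<le> n" and "j \<le> (\<Sum>i<n. M i) + 1"
  shows "zero_in_A n d ((\<Sum>i<n. a i * Var i ^ p) ^ ((\<Sum>i<n. M i) + 1 - j) * (\<Prod>i<j. Var i ^ r i))"
proof -
  define s where "s i = (if i < j then r i else 0)" for i
  have prod: "(\<Prod>i<j. Var i ^ r i) = (var_monomial n s :: 'a mpoly)"
    unfolding s_def using \<open>j \<le> n\<close> by (simp add: var_monomial_initial_segment)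
  show ?thesis
  proof (cases "\<exists>i<j. M i = 0")
    case True
    then obtain i where "i < j" "M i = 0" by blast
    with d \<open>j \<le> n\<close> have "i < n" "Var i ^ d i dvd var_monomial n s"
      by (auto simp: s_def intro: Var_power_dvd_var_monomial)
    then show ?thesis
      unfolding prod by (blast intro: zero_in_A_if_Var_power_dvd dvd_mult)
  next
    case False
    text \<open>The variables \<open>x\<^sub>i\<close>, \<open>i < j\<close>, already carry \<open>r\<^sub>i\<close> and can absorb only \<open>M\<^sub>i - 1\<close>
      further \<open>p\<close>-th powers.\<close>
    define b where "b i = (if i < j then M i - 1 else M i)" for i
    have "(\<Sum>i<n. b i) + (\<Sum>i<n. if i < j then 1 else 0) = (\<Sum>i<n. M i)"
      unfolding sum.distrib[symmetric] using False by (intro sum.cong) (auto simp: b_def)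
    moreover have "(\<Sum>i<n. if i < j then 1 else 0 :: nat) = j"
      using \<open>j \<le> n\<close> by (simp add: sum.If_cases Int_absorb1 subset_eq)
    ultimately have "(\<Sum>i<n. b i) < (\<Sum>i<n. M i) + 1 - j"
      using \<open>j \<le> (\<Sum>i<n. M i) + 1\<close> by linarith
    moreover have "\<forall>i<n. d i \<le> s i + p * (b i + 1)"
      using d r_le False by (auto simp: s_def b_def algebra_simps)
    ultimately show ?thesis
      unfolding prod by (rule power_sum_Var_power_mult_var_monomial_zero_in_A[rotated])
  qed
qed

lemma quotient_nonneg_if_remainder_le:
  fixes N :: int
  assumes d: "int d = N * int p + int r" and "0 < d" and "r \<le> p"
  shows "N \<ge> 0" and "d = nat N * p + r"
proof -
  have "0 < (N + 1) * int p"
    using assms by (simp add: distrib_right)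
  then show "N \<ge> 0" by (simp add: zero_less_mult_iff)
  then have "int d = int (nat N * p + r)"
    using d by simp
  then show "d = nat N * p + r" by (simp only: of_nat_eq_iff)
qed

theorem lemma3p2:
  fixes p n j :: nat and d r :: "nat \<Rightarrow> nat" and N :: "nat \<Rightarrow> int"
    and l :: "'a::field mpoly"
  assumes char: "CHAR('a) = p" and p_pos: "p > 0"
    and d_pos: "\<forall>i<n. d i > 0"
    and d_decomp: "\<forall>i<n. int (d i) = N i * int p + int (r i)"
    and r_bounds: "\<forall>i<n. 0 < r i \<and> r i \<le> p"
    and j_le_n: "j \<le> n"
    and j_le_N: "int j \<le> (\<Sum>i<n. N i) + 1"
    and lin: "linear_form n l"
  shows "zero_in_A n d
           (l ^ nat (((\<Sum>i<n. N i) - int j + 1) * int p) * (\<Prod>i<j. Var i ^ r i))"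
proof -
  obtain c where l: "l = (\<Sum>i<n. Const (c i) * Var i)"
    using lin unfolding linear_form_def by blast
  define M where "M i = nat (N i)" for i
  have "\<forall>i<n. N i \<ge> 0 \<and> d i = M i * p + r i"
    using quotient_nonneg_if_remainder_le d_decomp d_pos r_bounds unfolding M_def by blast
  then have d: "\<forall>i<n. d i = M i * p + r i" and sum_N: "(\<Sum>i<n. N i) = int (\<Sum>i<n. M i)"
    by (simp_all add: M_def)
  define m where "m = (\<Sum>i<n. M i) + 1 - j"
  have j_le_M: "j \<le> (\<Sum>i<n. M i) + 1"
    using j_le_N unfolding sum_N by linarith
  then have "nat (((\<Sum>i<n. N i) - int j + 1) * int p) = p * m"
    unfolding sum_N m_def by (simp add: nat_mult_distrib del: of_nat_sum) arith
  moreover have "l ^ p = (\<Sum>i<n. Const (c i ^ p) * Var i ^ p)"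
    using linear_form_power_CHAR[of c n] prime_CHAR_semidom[where 'a='a] char p_pos
    unfolding l by simp
  moreover have "zero_in_A n d ((\<Sum>i<n. Const (c i ^ p) * Var i ^ p) ^ m * (\<Prod>i<j. Var i ^ r i))"
    unfolding m_def using d r_bounds j_le_n j_le_M by (intro power_sum_Var_power_mult_prod_zero_in_A) auto
  ultimately show ?thesis by (simp add: power_mult)
qed

end
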